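(* The principal eigenvalue function $p\mapsto\mu_1(p)$, $[2,+\infty)\to\mathbb{R}$, is continuous.
   Context: For $p\ge2$, let $W_c^{1,p}(0,1)=\{v\in W^{1,p}(0,1):v'(0)=v(1)=0\}$, $\eta_1(p)=\inf\left\{\frac{\int_0^1|v'|^p dr}{(p-1)\int_0^1 r^{p-2}|v|^p dr}: v\in W_c^{1,p}(0,1),v\not\equiv0\right\}$ and $\mu_1(p)=\eta_1(p)^{1/(p-1)}$; $\mu_1(p)$ is the principal eigenvalue of $-\left(|v'|^{p-2}v'\right)'=\mu^{p-1}(p-1)r^{p-2}|v|^{p-2}v$ in $(0,1)$, $v'(0)=v(1)=0$. *)

theory Defs
  imports "HOL-Analysis.Analysis"
begin

text \<open>One-dimensional Sobolev space W^{1,p}(0,1): v is (the absolutely continuous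
representative) v(x) = v(0) + int_0^x g with weak derivative g in L^p(0,1).\<close>
definition W1p_with_deriv :: "real \<Rightarrow> (real \<Rightarrow> real) \<Rightarrow> (real \<Rightarrow> real) \<Rightarrow> bool" where
  "W1p_with_deriv p v g \<longleftrightarrow>
     set_integrable lborel {0..1} g \<and>
     set_integrable lborel {0..1} (\<lambda>x. \<bar>g x\<bar> powr p) \<and>
     (\<forall>x\<in>{0..1}. v x = v 0 + (LINT t:{0..x}|lborel. g t))"

definition Wc1p_with_deriv :: "real \<Rightarrow> (real \<Rightarrow> real) \<Rightarrow> (real \<Rightarrow> real) \<Rightarrow> bool" where
  "Wc1p_with_deriv p v g \<longleftrightarrow>
     W1p_with_deriv p v g \<and> (v has_real_derivative 0) (at 0 within {0..1}) \<and> v 1 = 0"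

definition eta1 :: "real \<Rightarrow> real" where
  "eta1 p = Inf { (LINT r:{0..1}|lborel. \<bar>g r\<bar> powr p) /
                  ((p - 1) * (LINT r:{0..1}|lborel. r powr (p - 2) * \<bar>v r\<bar> powr p))
                | v g. Wc1p_with_deriv p v g \<and> (\<exists>x\<in>{0..1}. v x \<noteq> 0) }"

definition mu1 :: "real \<Rightarrow> real" where
  "mu1 p = eta1 p powr (1 / (p - 1))"

end

theory Submission
  imports Defs
begin

(*
  Write N_p(g) = int_0^1 |g|^p (the gradient energy) and D_p(v) = int_0^1 r^(p-2) |v|^p
  (the weighted mass), so that eta1(p) is the infimum of N_p(g) / ((p-1) D_p(v)) over the
  admissible pairs (v, g) of W_c^{1,p}(0,1).  The quotient is scale invariant, so it suffices
  to consider normalized pairs, N_p(g) = 1; for those |v| <= int |g| <= 1 by Young's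
  inequality, hence D_p(v) <= 1 and eta1(p) >= 1/(p-1) > 0.  The proof studies the function
  H(p) = (p-1) eta1(p) = inf 1/D_p(v) (over normalized pairs) and establishes:
   (1) H is nondecreasing: a normalized pair for q is admissible for every p in [2,q], with
       N_p(g) <= 1 and D_q(v) <= D_p(v), because r and |v| are bounded by 1;
   (2) H is uniformly upper semicontinuous from the right on bounded intervals: truncating
       the derivative of a near-optimal pair for p (clamping it to [-M, M] and cutting it
       off near 0) yields a pair for q with energy <= M^(q-p) and weighted mass close to
       D_p(v) when q - p is small.
  Together (1) and (2) give continuity of H, hence of eta1 = H/(p-1) and of mu1.
*)

lemma unit_const_integrable: "set_integrable lborel {0..1::real} (\<lambda>_. c::real)"
  unfolding set_integrable_def
  by (intro integrable_scaleR_left integrable_real_indicator) auto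

lemma unit_const_integral: "(LINT x:{0..1::real}|lborel. c) = (c::real)"
  by (subst set_integral_const) auto

lemma unit_indicator_integral:
  fixes c \<alpha> \<beta> :: real
  assumes "0 \<le> \<alpha>" "\<alpha> \<le> \<beta>" "\<beta> \<le> 1"
  shows "set_integrable lborel {0..1} (\<lambda>r. c * indicator {\<alpha>..\<beta>} r)"
    and "(LINT r:{0..1}|lborel. c * indicator {\<alpha>..\<beta>} r) = c * (\<beta> - \<alpha>)"
proof -
  have e: "(\<lambda>r. indicator {0..1} r *\<^sub>R (c * indicator {\<alpha>..\<beta>} r)) = (\<lambda>r. c * indicator {\<alpha>..\<beta>} r)"
    using assms by (auto simp: indicator_def)
  show "set_integrable lborel {0..1} (\<lambda>r. c * indicator {\<alpha>..\<beta>} r)"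
    unfolding set_integrable_def e using assms
    by (intro integrable_mult_right integrable_real_indicator) auto
  show "(LINT r:{0..1}|lborel. c * indicator {\<alpha>..\<beta>} r) = c * (\<beta> - \<alpha>)"
    unfolding set_lebesgue_integral_def e using assms by simp
qed

lemma unit_initial_segment_integral:
  fixes c s :: real
  assumes "0 \<le> s" "s \<le> 1"
  shows "set_integrable lborel {0..1} (\<lambda>r. c * indicator {..s} r)"
    and "(LINT r:{0..1}|lborel. c * indicator {..s} r) = c * s"
proof -
  have "set_integrable lborel {0..1} (\<lambda>r. c * indicator {..s} r)
        = set_integrable lborel {0..1} (\<lambda>r. c * indicator {0..s} r)"
    by (rule set_integrable_cong) (auto simp: indicator_def)
  then show "set_integrable lborel {0..1} (\<lambda>r. c * indicator {..s} r)"
    using unit_indicator_integral(1)[of 0 s c] assms by simp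
  have "(LINT r:{0..1}|lborel. c * indicator {..s} r) = (LINT r:{0..1}|lborel. c * indicator {0..s} r)"
    by (rule set_lebesgue_integral_cong) (auto simp: indicator_def)
  then show "(LINT r:{0..1}|lborel. c * indicator {..s} r) = c * s"
    using unit_indicator_integral(2)[of 0 s c] assms by (cases "c = 0") simp_all
qed

lemma set_integral_nonneg_pointwise:
  fixes f :: "real \<Rightarrow> real"
  assumes "\<And>x. 0 \<le> f x"
  shows "0 \<le> (LINT x:A|lborel. f x)"
  unfolding set_lebesgue_integral_def
  using assms by (intro Bochner_Integration.integral_nonneg) (auto simp: indicator_def)

lemma set_integral_split_at:
  fixes g :: "real \<Rightarrow> real"
  assumes g: "set_integrable lborel {0..1} g" and x: "x \<in> {0..1}"
  shows "(LINT t:{0..1}|lborel. g t) = (LINT t:{0..x}|lborel. g t) + (LINT t:{x<..1}|lborel. g t)"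
proof -
  have e: "{0..1} = {0..x} \<union> {x<..(1::real)}" using x by auto
  have "set_integrable lborel {0..x} g" "set_integrable lborel {x<..1} g"
    using x by (auto intro: set_integrable_subset[OF g])
  then show ?thesis
    by (subst e, subst set_integral_Un) auto
qed

lemma partial_integral_deviation:
  fixes g :: "real \<Rightarrow> real"
  assumes g: "set_integrable lborel {0..1} g" and x: "x \<in> {0..1}"
  shows "\<bar>(LINT t:{0..x}|lborel. g t) - (LINT t:{0..1}|lborel. g t)\<bar> \<le> (LINT t:{0..1}|lborel. \<bar>g t\<bar>)"
proof -
  have ga: "set_integrable lborel {0..1} (\<lambda>t. \<bar>g t\<bar>)" using g by (rule set_integrable_abs)
  have "set_integrable lborel {x<..1} g"
    using x by (auto intro: set_integrable_subset[OF g])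
  then have "\<bar>LINT t:{x<..1}|lborel. g t\<bar> \<le> (LINT t:{x<..1}|lborel. \<bar>g t\<bar>)"
    using set_integral_norm_bound[of lborel "{x<..1}" g] by simp
  moreover have "0 \<le> (LINT t:{0..x}|lborel. \<bar>g t\<bar>)"
    by (rule set_integral_nonneg_pointwise) simp
  ultimately show ?thesis using set_integral_split_at[OF g x] set_integral_split_at[OF ga x] by linarith
qed

lemma set_borel_measurable_abs_powr:
  fixes g :: "real \<Rightarrow> real"
  assumes "set_integrable lborel A g" "0 < p"
  shows "set_borel_measurable lborel A (\<lambda>x. \<bar>g x\<bar> powr p)"
proof -
  have "(\<lambda>x. indicator A x *\<^sub>R g x) \<in> borel_measurable lborel"
    using assms(1) unfolding set_integrable_def by (rule borel_measurable_integrable)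
  then have "(\<lambda>x. \<bar>indicator A x *\<^sub>R g x\<bar> powr p) \<in> borel_measurable lborel"
    by measurable
  moreover have "(\<lambda>x. indicator A x *\<^sub>R \<bar>g x\<bar> powr p) = (\<lambda>x. \<bar>indicator A x *\<^sub>R g x\<bar> powr p)"
    using assms(2) by (auto simp: indicator_def)
  ultimately show ?thesis unfolding set_borel_measurable_def by simp
qed

lemma weighted_powr_integrable:
  fixes v :: "real \<Rightarrow> real"
  assumes c: "continuous_on {0..1} v" and B: "\<And>x. x \<in> {0..1} \<Longrightarrow> \<bar>v x\<bar> \<le> B"
    and a: "0 \<le> a" and p: "0 < p"
  shows "set_integrable lborel {0..1} (\<lambda>r. r powr a * \<bar>v r\<bar> powr p)"
proof (rule set_integrable_bound[OF unit_const_integrable[of "\<bar>B\<bar> powr p"]])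
  have "(\<lambda>r. indicator {0..1} r *\<^sub>R v r) \<in> borel_measurable borel"
    using c by (intro borel_measurable_continuous_on_indicator) auto
  then have "(\<lambda>r. r powr a * \<bar>indicator {0..1} r *\<^sub>R v r\<bar> powr p) \<in> borel_measurable lborel"
    by measurable
  moreover have "(\<lambda>r. indicator {0..1} r *\<^sub>R (r powr a * \<bar>v r\<bar> powr p))
               = (\<lambda>r. r powr a * \<bar>indicator {0..1} r *\<^sub>R v r\<bar> powr p)"
    using p by (auto simp: indicator_def)
  ultimately show "set_borel_measurable lborel {0..1} (\<lambda>r. r powr a * \<bar>v r\<bar> powr p)"
    unfolding set_borel_measurable_def by simp
  show "AE x in lborel. x \<in> {0..1} \<longrightarrow> norm (x powr a * \<bar>v x\<bar> powr p) \<le> norm (\<bar>B\<bar> powr p)"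
  proof (rule AE_I2, rule impI)
    fix x :: real assume x: "x \<in> {0..1}"
    have "x powr a \<le> 1" using x a by (auto intro: powr_le1)
    moreover have "\<bar>v x\<bar> powr p \<le> \<bar>B\<bar> powr p" using B[OF x] p by (auto intro: powr_mono2)
    ultimately have "x powr a * \<bar>v x\<bar> powr p \<le> 1 * \<bar>B\<bar> powr p"
      by (intro mult_mono) auto
    then show "norm (x powr a * \<bar>v x\<bar> powr p) \<le> norm (\<bar>B\<bar> powr p)" by simp
  qed
qed

lemma powr_le_affine:
  fixes a \<alpha> :: real
  assumes "0 \<le> a" "0 < \<alpha>" "\<alpha> \<le> 1"
  shows "a powr \<alpha> \<le> \<alpha> * a + (1 - \<alpha>)"
proof (cases "a = 0")
  case True then show ?thesis using assms by simp
next
  case False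
  then show ?thesis using Youngs_inequality_0[of \<alpha> "1-\<alpha>" a 1] assms by simp
qed

text \<open>Interpolation of a lower power by a higher one: it yields both the L1 bound on the
  derivative of a normalized pair and the passage from exponent q to a smaller exponent p.\<close>

lemma abs_powr_interpolate:
  fixes x p q :: real
  assumes "0 < p" "p \<le> q"
  shows "\<bar>x\<bar> powr p \<le> (p/q) * \<bar>x\<bar> powr q + (1 - p/q)"
proof -
  have "(\<bar>x\<bar> powr q) powr (p/q) \<le> (p/q) * \<bar>x\<bar> powr q + (1 - p/q)"
    using assms by (intro powr_le_affine) auto
  moreover have "(\<bar>x\<bar> powr q) powr (p/q) = \<bar>x\<bar> powr p"
    using assms by (simp add: powr_powr)
  ultimately show ?thesis by simp
qed

lemma powr_diff_le:
  fixes a b q :: real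
  assumes "0 \<le> b" "b \<le> a" "a \<le> 1" "1 \<le> q"
  shows "a powr q - b powr q \<le> q * (a - b)"
proof (cases "b = 0")
  case True
  have "a powr q \<le> a powr 1" using assms by (intro powr_mono') auto
  also have "\<dots> \<le> q * a" using assms by (cases "a = 0") (auto intro: mult_left_mono[of 1 q a, simplified])
  finally show ?thesis using True assms by simp
next
  case False
  then have b0: "0 < b" using assms by simp
  show ?thesis
  proof (cases "b = a")
    case True then show ?thesis by simp
  next
    case False
    then have ba: "b < a" using assms by simp
    have der: "\<And>x. b \<le> x \<Longrightarrow> x \<le> a \<Longrightarrow> ((\<lambda>z. z powr q) has_real_derivative q * x powr (q - 1)) (at x)"
      using b0 by (intro has_real_derivative_powr) auto
    obtain z where z: "b < z" "z < a" "a powr q - b powr q = (a - b) * (q * z powr (q - 1))"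
      using MVT2[OF ba der] by blast
    have "z powr (q - 1) \<le> 1" using z assms b0 by (intro powr_le1) auto
    then have "q * z powr (q - 1) \<le> q" using assms by (simp add: mult_left_le)
    then show ?thesis using z ba by (simp add: mult_left_mono mult.commute)
  qed
qed

lemma abs_powr_lower_bound:
  fixes x y q :: real
  assumes "\<bar>x\<bar> \<le> 1" "\<bar>y\<bar> \<le> 1" "1 \<le> q" "\<bar>x - y\<bar> \<le> e"
  shows "\<bar>x\<bar> powr q - q * e \<le> \<bar>y\<bar> powr q"
proof (cases "\<bar>y\<bar> \<le> \<bar>x\<bar>")
  case True
  have "\<bar>x\<bar> powr q - \<bar>y\<bar> powr q \<le> q * (\<bar>x\<bar> - \<bar>y\<bar>)" using powr_diff_le True assms by simp
  also have "\<dots> \<le> q * e" using assms by (intro mult_left_mono) auto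
  finally show ?thesis by simp
next
  case False
  then have "\<bar>x\<bar> powr q \<le> \<bar>y\<bar> powr q" using assms by (intro powr_mono2) auto
  moreover have "0 \<le> q * e" using assms by simp
  ultimately show ?thesis by simp
qed

lemma weight_antimono:
  fixes r y p q :: real
  assumes r: "0 \<le> r" "r \<le> 1" and y: "\<bar>y\<bar> \<le> 1" and p: "2 \<le> p" "p \<le> q"
  shows "r powr (q-2) * \<bar>y\<bar> powr q \<le> r powr (p-2) * \<bar>y\<bar> powr p"
proof (cases "r = 0 \<or> y = 0")
  case True then show ?thesis using p by auto
next
  case False
  then have r0: "0 < r" and y0: "0 < \<bar>y\<bar>" using r by auto
  have e1: "r powr (q-2) = r powr (p-2) * r powr (q-p)" using r0 by (simp add: powr_add[symmetric])
  have e2: "\<bar>y\<bar> powr q = \<bar>y\<bar> powr p * \<bar>y\<bar> powr (q-p)" using y0 by (simp add: powr_add[symmetric])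
  have a: "r powr (q-p) \<le> 1" using r p by (auto intro: powr_le1)
  have b: "\<bar>y\<bar> powr (q-p) \<le> 1" using y p by (auto intro: powr_le1)
  have "r powr (q-2) * \<bar>y\<bar> powr q = (r powr (p-2) * \<bar>y\<bar> powr p) * (r powr (q-p) * \<bar>y\<bar> powr (q-p))"
    unfolding e1 e2 by (simp add: algebra_simps)
  also have "\<dots> \<le> (r powr (p-2) * \<bar>y\<bar> powr p) * 1"
    using a b by (intro mult_left_mono) (auto intro: mult_le_one)
  finally show ?thesis by simp
qed

lemma clamp_error:
  fixes g M \<delta> t p :: real
  assumes M: "1 \<le> M" and p: "2 \<le> p"
  defines "gh \<equiv> (if \<delta> \<le> t then max (-M) (min M g) else 0)"
  shows "\<bar>gh - g\<bar> \<le> M * indicator {..\<delta>} t + \<bar>g\<bar> powr p / M"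
    and "\<bar>gh\<bar> \<le> M" and "\<bar>gh\<bar> \<le> \<bar>g\<bar>"
proof -
  have big: "\<bar>g\<bar> \<le> \<bar>g\<bar> powr p / M" if "M < \<bar>g\<bar>"
  proof -
    have g0: "0 < \<bar>g\<bar>" using that M by simp
    have "M powr 1 \<le> M powr (p - 1)" using M p by (intro powr_mono) auto
    then have "M \<le> M powr (p - 1)" using M by simp
    also have "\<dots> \<le> \<bar>g\<bar> powr (p - 1)" using that M p by (intro powr_mono2) auto
    finally have "M * \<bar>g\<bar> \<le> \<bar>g\<bar> powr (p - 1) * \<bar>g\<bar>" using g0 by simp
    also have "\<dots> = \<bar>g\<bar> powr (p - 1) * \<bar>g\<bar> powr 1" using g0 by simp
    also have "\<dots> = \<bar>g\<bar> powr ((p - 1) + 1)" by (rule powr_add[symmetric])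
    also have "\<dots> = \<bar>g\<bar> powr p" by simp
    finally show ?thesis using M by (simp add: field_simps)
  qed
  have nn: "0 \<le> \<bar>g\<bar> powr p / M" using M by simp
  show "\<bar>gh - g\<bar> \<le> M * indicator {..\<delta>} t + \<bar>g\<bar> powr p / M"
  proof (cases "\<delta> \<le> t")
    case True
    have "\<bar>gh - g\<bar> \<le> \<bar>g\<bar> powr p / M"
      using True nn big M by (cases "\<bar>g\<bar> \<le> M") (auto simp: gh_def)
    moreover have "0 \<le> M * indicator {..\<delta>} t" using M by simp
    ultimately show ?thesis by simp
  next
    case False
    then have "gh = 0" "indicator {..\<delta>} t = (1::real)" by (auto simp: gh_def)
    moreover have "\<bar>g\<bar> \<le> M + \<bar>g\<bar> powr p / M"
      using nn big M by (cases "\<bar>g\<bar> \<le> M") linarith+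
    ultimately show ?thesis by simp
  qed
  show "\<bar>gh\<bar> \<le> M" using M by (auto simp: gh_def)
  show "\<bar>gh\<bar> \<le> \<bar>g\<bar>" using M by (auto simp: gh_def abs_if)
qed

lemma clamped_powr_bound:
  fixes gh g M p q :: real
  assumes "\<bar>gh\<bar> \<le> M" "\<bar>gh\<bar> \<le> \<bar>g\<bar>" "0 < p" "p \<le> q"
  shows "\<bar>gh\<bar> powr q \<le> M powr (q - p) * \<bar>g\<bar> powr p"
proof (cases "gh = 0")
  case True then show ?thesis by simp
next
  case False
  then have g0: "0 < \<bar>gh\<bar>" by simp
  have "\<bar>gh\<bar> powr q = \<bar>gh\<bar> powr (q - p) * \<bar>gh\<bar> powr p" using g0 by (simp add: powr_add[symmetric])
  also have "\<dots> \<le> M powr (q - p) * \<bar>g\<bar> powr p"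
    using assms g0 by (intro mult_mono powr_mono2) auto
  finally show ?thesis .
qed

lemma weight_exponent_shift_large:
  fixes r y s p q :: real
  assumes r: "0 \<le> r" and large: "s^2 \<le> r * \<bar>y\<bar>" and s: "0 < s" and p: "p \<le> q"
  shows "(s^2) powr (q - p) * (r powr (p-2) * \<bar>y\<bar> powr p) \<le> r powr (q-2) * \<bar>y\<bar> powr q"
proof -
  have "0 < r * \<bar>y\<bar>" using large s by (smt (verit) zero_less_power)
  then have r0: "0 < r" and y0: "0 < \<bar>y\<bar>" using r by (auto simp: zero_less_mult_iff)
  have "r powr (q-2) = r powr (p-2) * r powr (q-p)" "\<bar>y\<bar> powr q = \<bar>y\<bar> powr p * \<bar>y\<bar> powr (q-p)"
    by (simp_all flip: powr_add)
  then have "r powr (q-2) * \<bar>y\<bar> powr q = (r powr (p-2) * \<bar>y\<bar> powr p) * (r powr (q-p) * \<bar>y\<bar> powr (q-p))"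
    by (simp add: algebra_simps)
  also have "\<dots> = (r powr (p-2) * \<bar>y\<bar> powr p) * (r * \<bar>y\<bar>) powr (q - p)"
    using r0 by (simp add: powr_mult)
  finally have e: "r powr (q-2) * \<bar>y\<bar> powr q = (r * \<bar>y\<bar>) powr (q - p) * (r powr (p-2) * \<bar>y\<bar> powr p)"
    by simp
  have "(s^2) powr (q - p) \<le> (r * \<bar>y\<bar>) powr (q - p)" using large s p by (intro powr_mono2) auto
  then show ?thesis unfolding e by (intro mult_right_mono) auto
qed

lemma weight_small:
  fixes r y s p :: real
  assumes r: "0 \<le> r" "r \<le> 1" and y: "\<bar>y\<bar> \<le> 1" and p: "2 \<le> p" and s: "0 < s"
    and small: "r * \<bar>y\<bar> < s^2"
  shows "r powr (p-2) * \<bar>y\<bar> powr p \<le> s^2 + indicator {..s} r"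
proof (cases "r \<le> s")
  case True
  have "r powr (p-2) * \<bar>y\<bar> powr p \<le> 1"
    using r y p by (intro mult_le_one powr_le1) auto
  moreover have "indicator {..s} r = (1::real)" using True by simp
  moreover have "0 \<le> s^2" by simp
  ultimately show ?thesis by linarith
next
  case False
  have "\<bar>y\<bar> < s"
  proof (rule ccontr)
    assume "\<not> \<bar>y\<bar> < s"
    then have "s * s \<le> r * \<bar>y\<bar>" using False s by (intro mult_mono) auto
    then show False using small by (simp add: power2_eq_square)
  qed
  have "\<bar>y\<bar> powr p \<le> \<bar>y\<bar> powr 2" by (rule powr_mono') (use y p in auto)
  also have "\<dots> = \<bar>y\<bar>^2" by (rule powr_numeral) simp
  also have "\<dots> \<le> s^2" using \<open>\<bar>y\<bar> < s\<close> by (intro power_mono) auto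
  finally have "\<bar>y\<bar> powr p \<le> s^2" .
  moreover have "r powr (p-2) \<le> 1" using r p by (auto intro: powr_le1)
  ultimately have "r powr (p-2) * \<bar>y\<bar> powr p \<le> s^2"
    using mult_left_le_one_le[of "\<bar>y\<bar> powr p" "r powr (p-2)"] by simp
  moreover have "(0::real) \<le> indicator {..s} r" by simp
  ultimately show ?thesis by linarith
qed

lemma weight_exponent_shift:
  fixes r y s p q :: real
  assumes r: "0 \<le> r" "r \<le> 1" and y: "\<bar>y\<bar> \<le> 1" and p: "2 \<le> p" "p \<le> q" and s: "0 < s"
  shows "(s^2) powr (q - p) * (r powr (p-2) * \<bar>y\<bar> powr p - s^2 - indicator {..s} r)
           \<le> r powr (q-2) * \<bar>y\<bar> powr q"
proof (cases "s^2 \<le> r * \<bar>y\<bar>")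
  case True
  have "(s^2) powr (q - p) * (r powr (p-2) * \<bar>y\<bar> powr p - s^2 - indicator {..s} r)
        \<le> (s^2) powr (q - p) * (r powr (p-2) * \<bar>y\<bar> powr p)"
  proof (rule mult_left_mono)
    have "(0::real) \<le> indicator {..s} r" "0 \<le> s^2" by simp_all
    then show "r powr (p-2) * \<bar>y\<bar> powr p - s^2 - indicator {..s} r \<le> r powr (p-2) * \<bar>y\<bar> powr p"
      by linarith
  qed simp
  with weight_exponent_shift_large[OF r(1) True s p(2)] show ?thesis by linarith
next
  case False
  then have "(s^2) powr (q - p) * (r powr (p-2) * \<bar>y\<bar> powr p - s^2 - indicator {..s} r) \<le> 0"
    using weight_small[OF r y p(1) s] by (intro mult_nonneg_nonpos) auto
  moreover have "0 \<le> r powr (q-2) * \<bar>y\<bar> powr q" by simp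
  ultimately show ?thesis by linarith
qed

lemma frac_bound:
  fixes \<tau> :: real
  assumes "0 \<le> \<tau>" "\<tau> \<le> 1/4"
  shows "(1 + \<tau>) / (1 - 2 * \<tau>) \<le> 1 + 6 * \<tau>"
proof -
  have "12 * \<tau> * \<tau> \<le> 3 * \<tau>" using assms mult_left_mono[of \<tau> "1/4" "12*\<tau>"] by simp
  then have "1 + \<tau> \<le> (1 + 6 * \<tau>) * (1 - 2 * \<tau>)" by (simp add: algebra_simps)
  moreover have "0 < 1 - 2 * \<tau>" using assms by simp
  ultimately show ?thesis by (simp add: divide_le_eq)
qed

lemma powr_close_to_one:
  fixes a \<tau> :: real
  assumes a: "0 < a" and \<tau>: "0 < \<tau>"
  obtains d where "0 < d" "\<And>x. 0 \<le> x \<Longrightarrow> x \<le> d \<Longrightarrow> \<bar>a powr x - 1\<bar> < \<tau>"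
proof -
  have "(\<lambda>x. a powr x) \<midarrow>0\<rightarrow> a powr 0"
    using a by (intro tendsto_intros) auto
  then obtain e where e: "0 < e" "\<And>x. x \<noteq> 0 \<Longrightarrow> \<bar>x\<bar> < e \<Longrightarrow> \<bar>a powr x - 1\<bar> < \<tau>"
    using \<tau> a unfolding LIM_eq by auto
  show ?thesis
  proof (rule that[of "e/2"])
    fix x :: real assume "0 \<le> x" "x \<le> e/2"
    then show "\<bar>a powr x - 1\<bar> < \<tau>"
      using e a \<tau> by (cases "x = 0") auto
  qed (use e in simp)
qed

definition grad_energy :: "real \<Rightarrow> (real \<Rightarrow> real) \<Rightarrow> real" where
  "grad_energy p g = (LINT r:{0..1}|lborel. \<bar>g r\<bar> powr p)"

definition weighted_mass :: "real \<Rightarrow> (real \<Rightarrow> real) \<Rightarrow> real" where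
  "weighted_mass p v = (LINT r:{0..1}|lborel. r powr (p - 2) * \<bar>v r\<bar> powr p)"

definition admissible :: "real \<Rightarrow> (real \<Rightarrow> real) \<Rightarrow> (real \<Rightarrow> real) \<Rightarrow> bool" where
  "admissible p v g \<longleftrightarrow> Wc1p_with_deriv p v g \<and> (\<exists>x\<in>{0..1}. v x \<noteq> 0)"

lemma eta1_as_Inf:
  "eta1 p = Inf {grad_energy p g / ((p - 1) * weighted_mass p v) | v g. admissible p v g}"
  unfolding eta1_def grad_energy_def weighted_mass_def admissible_def by simp

lemma grad_energy_nonneg: "0 \<le> grad_energy p g"
  unfolding grad_energy_def by (rule set_integral_nonneg_pointwise) simp

lemma Wc1p_deriv_integrable: "Wc1p_with_deriv p v g \<Longrightarrow> set_integrable lborel {0..1} g"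
  by (simp add: Wc1p_with_deriv_def W1p_with_deriv_def)

lemma Wc1p_deriv_powr_integrable:
  "Wc1p_with_deriv p v g \<Longrightarrow> set_integrable lborel {0..1} (\<lambda>x. \<bar>g x\<bar> powr p)"
  by (simp add: Wc1p_with_deriv_def W1p_with_deriv_def)

lemma Wc1p_repr:
  assumes "Wc1p_with_deriv p v g" "x \<in> {0..1}"
  shows "v x = (LINT t:{0..x}|lborel. g t) - (LINT t:{0..1}|lborel. g t)"
proof -
  have prim: "\<forall>x\<in>{0..1}. v x = v 0 + (LINT t:{0..x}|lborel. g t)" and "v 1 = 0"
    using assms unfolding Wc1p_with_deriv_def W1p_with_deriv_def by blast+
  moreover have "v 1 = v 0 + (LINT t:{0..1}|lborel. g t)" "v x = v 0 + (LINT t:{0..x}|lborel. g t)"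
    using prim assms(2) by (meson atLeastAtMost_iff order_refl zero_le_one)+
  ultimately show ?thesis by linarith
qed

lemma Wc1p_continuous:
  assumes "Wc1p_with_deriv p v g"
  shows "continuous_on {0..1} v"
proof -
  have g: "set_integrable lborel {0..1} g" using assms by (rule Wc1p_deriv_integrable)
  have gi: "g integrable_on {0..1}" using set_borel_integral_eq_integral(1)[OF g] .
  have "continuous_on {0..1} (\<lambda>x. integral {0..x} g - (LINT t:{0..1}|lborel. g t))"
    by (intro continuous_intros indefinite_integral_continuous_1 gi)
  moreover have "integral {0..x} g - (LINT t:{0..1}|lborel. g t) = v x" if x: "x \<in> {0..1}" for x
  proof -
    have "set_integrable lborel {0..x} g" using x by (auto intro: set_integrable_subset[OF g])
    then show ?thesis
      using Wc1p_repr[OF assms x] set_borel_integral_eq_integral(2) by metis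
  qed
  ultimately show ?thesis by (rule continuous_on_eq)
qed

lemma Wc1p_sup_bound:
  assumes "Wc1p_with_deriv p v g" "x \<in> {0..1}"
  shows "\<bar>v x\<bar> \<le> (LINT t:{0..1}|lborel. \<bar>g t\<bar>)"
  using Wc1p_repr[OF assms] partial_integral_deviation[OF Wc1p_deriv_integrable[OF assms(1)] assms(2)]
  by simp

lemma Wc1p_weight_integrable:
  assumes "Wc1p_with_deriv p v g" "0 \<le> a" "0 < q"
  shows "set_integrable lborel {0..1} (\<lambda>r. r powr a * \<bar>v r\<bar> powr q)"
  using weighted_powr_integrable[OF Wc1p_continuous[OF assms(1)] Wc1p_sup_bound[OF assms(1)] assms(2,3)] .

lemma Wc1p_scale:
  assumes W: "Wc1p_with_deriv p v g"
  shows "Wc1p_with_deriv p (\<lambda>x. c * v x) (\<lambda>x. c * g x)"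
proof -
  have g: "set_integrable lborel {0..1} g" and gp: "set_integrable lborel {0..1} (\<lambda>x. \<bar>g x\<bar> powr p)"
    and prim: "\<forall>x\<in>{0..1}. v x = v 0 + (LINT t:{0..x}|lborel. g t)"
    and d: "(v has_real_derivative 0) (at 0 within {0..1})" and v1: "v 1 = 0"
    using W unfolding Wc1p_with_deriv_def W1p_with_deriv_def by blast+
  have "(\<lambda>x. \<bar>c * g x\<bar> powr p) = (\<lambda>x. \<bar>c\<bar> powr p * \<bar>g x\<bar> powr p)"
    by (simp add: abs_mult powr_mult)
  then have gp': "set_integrable lborel {0..1} (\<lambda>x. \<bar>c * g x\<bar> powr p)" using gp by simp
  have prim': "\<forall>x\<in>{0..1}. c * v x = c * v 0 + (LINT t:{0..x}|lborel. c * g t)"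
  proof
    fix x :: real assume "x \<in> {0..1}"
    then have "v x = v 0 + (LINT t:{0..x}|lborel. g t)" using prim by blast
    then show "c * v x = c * v 0 + (LINT t:{0..x}|lborel. c * g t)" by (simp add: distrib_left)
  qed
  have d': "((\<lambda>x. c * v x) has_real_derivative 0) (at 0 within {0..1})"
    using DERIV_cmult[OF d, of c] by simp
  show ?thesis
    unfolding Wc1p_with_deriv_def W1p_with_deriv_def
    by (intro conjI set_integrable_mult_right[OF g] gp' prim' d') (simp add: v1)
qed

lemma Wc1p_of_bounded_deriv:
  fixes h :: "real \<Rightarrow> real"
  assumes hm: "set_borel_measurable lborel {0..1} h" and hb: "\<And>t. t \<in> {0..1} \<Longrightarrow> \<bar>h t\<bar> \<le> B"
    and \<delta>: "0 < \<delta>" "\<And>t. t < \<delta> \<Longrightarrow> h t = 0" and p: "0 < p"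
  shows "Wc1p_with_deriv p (\<lambda>x. (LINT t:{0..x}|lborel. h t) - (LINT t:{0..1}|lborel. h t)) h"
proof -
  let ?V = "\<lambda>x. (LINT t:{0..x}|lborel. h t) - (LINT t:{0..1}|lborel. h t)"
  have hi: "set_integrable lborel {0..1} h"
    by (rule set_integrable_bound[OF unit_const_integrable[of B] hm], rule AE_I2) (use hb in force)
  have hp: "set_integrable lborel {0..1} (\<lambda>x. \<bar>h x\<bar> powr p)"
  proof (rule set_integrable_bound[OF unit_const_integrable[of "\<bar>B\<bar> powr p"]
                                     set_borel_measurable_abs_powr[OF hi p]], rule AE_I2, rule impI)
    fix x :: real assume "x \<in> {0..1}"
    then have "\<bar>h x\<bar> \<le> \<bar>B\<bar>" using hb by force
    then show "norm (\<bar>h x\<bar> powr p) \<le> norm (\<bar>B\<bar> powr p)" using p by (simp add: powr_mono2)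
  qed
  have z: "(LINT t:{0..x}|lborel. h t) = 0" if "x < \<delta>" for x
  proof -
    have "(\<lambda>t. indicator {0..x} t *\<^sub>R h t) = (\<lambda>t. 0)"
      using that \<delta>(2) by (auto simp: indicator_def)
    then show ?thesis unfolding set_lebesgue_integral_def by simp
  qed
  have prim: "\<forall>x\<in>{0..1}. ?V x = ?V 0 + (LINT t:{0..x}|lborel. h t)"
    using z[of 0] \<delta> by simp
  have "((\<lambda>x. ?V 0) has_real_derivative 0) (at 0 within {0..1})" by simp
  then have d: "(?V has_real_derivative 0) (at 0 within {0..1})"
    by (rule has_field_derivative_transform_within[OF _ \<delta>(1)])
       (use z z[of 0] \<delta>(1) in \<open>auto simp: dist_real_def\<close>)
  show ?thesis
    unfolding Wc1p_with_deriv_def W1p_with_deriv_def using hi hp prim d by simp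
qed

lemma Wc1p_lower_exponent:
  assumes W: "Wc1p_with_deriv q v g" and p: "0 < p" "p \<le> q"
  shows "Wc1p_with_deriv p v g"
    and "grad_energy p g \<le> (p/q) * grad_energy q g + (1 - p/q)"
proof -
  have g: "set_integrable lborel {0..1} g" using Wc1p_deriv_integrable[OF W] .
  have gq: "set_integrable lborel {0..1} (\<lambda>x. \<bar>g x\<bar> powr q)" using Wc1p_deriv_powr_integrable[OF W] .
  have b: "set_integrable lborel {0..1} (\<lambda>x. (p/q) * \<bar>g x\<bar> powr q + (1 - p/q))"
    using gq unit_const_integrable by (intro set_integral_add) auto
  have gp: "set_integrable lborel {0..1} (\<lambda>x. \<bar>g x\<bar> powr p)"
  proof (rule set_integrable_bound[OF b set_borel_measurable_abs_powr[OF g p(1)]], rule AE_I2, rule impI)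
    fix x :: real
    have "\<bar>g x\<bar> powr p \<le> (p/q) * \<bar>g x\<bar> powr q + (1 - p/q)" using abs_powr_interpolate p by blast
    moreover have "0 \<le> (p/q) * \<bar>g x\<bar> powr q + (1 - p/q)" using p by simp
    ultimately show "norm (\<bar>g x\<bar> powr p) \<le> norm ((p/q) * \<bar>g x\<bar> powr q + (1 - p/q))" by simp
  qed
  show "Wc1p_with_deriv p v g"
    using W gp unfolding Wc1p_with_deriv_def W1p_with_deriv_def by blast
  have "grad_energy p g \<le> (LINT x:{0..1}|lborel. (p/q) * \<bar>g x\<bar> powr q + (1 - p/q))"
    unfolding grad_energy_def using gp b abs_powr_interpolate p by (intro set_integral_mono) auto
  also have "\<dots> = (p/q) * grad_energy q g + (1 - p/q)"
    using gq unit_const_integrable by (simp add: grad_energy_def unit_const_integral)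
  finally show "grad_energy p g \<le> (p/q) * grad_energy q g + (1 - p/q)" .
qed

lemma normalized_L1_bound:
  assumes W: "Wc1p_with_deriv p v g" and N: "grad_energy p g = 1" and p: "1 \<le> p"
  shows "(LINT t:{0..1}|lborel. \<bar>g t\<bar>) \<le> 1"
  using Wc1p_lower_exponent(2)[OF W zero_less_one p] N by (simp add: grad_energy_def)

lemma normalized_sup_bound:
  assumes W: "Wc1p_with_deriv p v g" and N: "grad_energy p g = 1" and p: "1 \<le> p"
    and x: "x \<in> {0..1}"
  shows "\<bar>v x\<bar> \<le> 1"
  using Wc1p_sup_bound[OF W x] normalized_L1_bound[OF W N p] by simp

text \<open>A nonzero element of W_c^{1,p} has positive weighted mass: by continuity |v| stays
  bounded away from 0 on a small interval [\<alpha>, \<beta>] with \<alpha> > 0.\<close>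

lemma Wc1p_weight_integral_pos:
  assumes W: "Wc1p_with_deriv p v g" and x0: "x0 \<in> {0..1}" "v x0 \<noteq> 0"
    and a: "0 \<le> a" and q: "0 < q"
  shows "0 < (LINT r:{0..1}|lborel. r powr a * \<bar>v r\<bar> powr q)"
proof -
  define m where "m = \<bar>v x0\<bar> / 2"
  have m: "0 < m" using x0 by (simp add: m_def)
  obtain d where d: "0 < d" "\<And>y. y \<in> {0..1} \<Longrightarrow> dist y x0 < d \<Longrightarrow> dist (v y) (v x0) < m"
    using Wc1p_continuous[OF W] x0(1) m unfolding continuous_on_iff by metis
  define e where "e = min (d/2) (1/4)"
  have e: "0 < e" "e \<le> d/2" "e \<le> 1/4" using d by (auto simp: e_def)
  obtain \<alpha> \<beta> where ab: "0 < \<alpha>" "\<alpha> < \<beta>" "\<beta> \<le> 1" "\<And>y. y \<in> {\<alpha>..\<beta>} \<Longrightarrow> y \<in> {0..1} \<and> dist y x0 < d"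
  proof (cases "x0 < 1/2")
    case True
    show ?thesis
      by (rule that[of "x0 + e/2" "x0 + e"]) (use True x0 e in \<open>auto simp: dist_real_def\<close>)
  next
    case False
    show ?thesis
      by (rule that[of "x0 - e" "x0 - e/2"]) (use False x0 e in \<open>auto simp: dist_real_def\<close>)
  qed
  define c where "c = \<alpha> powr a * m powr q"
  have c: "0 < c" using ab m by (simp add: c_def)
  have "0 < c * (\<beta> - \<alpha>)" using c ab by simp
  also have "\<dots> = (LINT r:{0..1}|lborel. c * indicator {\<alpha>..\<beta>} r)"
    by (rule unit_indicator_integral(2)[symmetric]) (use ab in auto)
  also have "\<dots> \<le> (LINT r:{0..1}|lborel. r powr a * \<bar>v r\<bar> powr q)"
  proof (rule set_integral_mono)
    show "set_integrable lborel {0..1} (\<lambda>r. c * indicator {\<alpha>..\<beta>} r)"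
      using unit_indicator_integral(1)[of \<alpha> \<beta> c] ab by simp
    show "set_integrable lborel {0..1} (\<lambda>r. r powr a * \<bar>v r\<bar> powr q)"
      by (rule Wc1p_weight_integrable[OF W a q])
    fix r :: real assume r: "r \<in> {0..1}"
    show "c * indicator {\<alpha>..\<beta>} r \<le> r powr a * \<bar>v r\<bar> powr q"
    proof (cases "r \<in> {\<alpha>..\<beta>}")
      case True
      then have "dist (v r) (v x0) < m" using ab(4) d(2) by blast
      then have vr: "m \<le> \<bar>v r\<bar>" unfolding m_def dist_real_def by linarith
      have "\<alpha> powr a \<le> r powr a" using True ab a by (intro powr_mono2) auto
      moreover have "m powr q \<le> \<bar>v r\<bar> powr q" using vr m q by (intro powr_mono2) auto
      ultimately have "c \<le> r powr a * \<bar>v r\<bar> powr q"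
        unfolding c_def by (intro mult_mono) auto
      then show ?thesis using True by simp
    qed simp
  qed
  finally show ?thesis .
qed

lemma admissible_mass_pos:
  assumes A: "admissible p v g" and p: "2 \<le> p"
  shows "0 < weighted_mass p v"
  using A Wc1p_weight_integral_pos[of p v g _ "p-2" p] p
  unfolding admissible_def weighted_mass_def by auto

text \<open>A nonzero element of W_c^{1,p} has positive energy, since |v| \<le> int |g|.\<close>

lemma admissible_energy_pos:
  assumes A: "admissible p v g" and p: "0 < p"
  shows "0 < grad_energy p g"
proof (rule ccontr)
  obtain x0 where W: "Wc1p_with_deriv p v g" and x0: "x0 \<in> {0..1}" "v x0 \<noteq> 0"
    using A unfolding admissible_def by blast
  assume "\<not> 0 < grad_energy p g"
  then have "grad_energy p g = 0" using grad_energy_nonneg[of p g] by linarith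
  then have "integral\<^sup>L lborel (\<lambda>r. indicator {0..1} r *\<^sub>R \<bar>g r\<bar> powr p) = 0"
    unfolding grad_energy_def set_lebesgue_integral_def by simp
  then have "AE r in lborel. indicator {0..1} r *\<^sub>R \<bar>g r\<bar> powr p = 0"
    using Wc1p_deriv_powr_integrable[OF W] unfolding set_integrable_def
    by (subst (asm) integral_nonneg_eq_0_iff_AE) (auto simp: indicator_def)
  then have "AE r in lborel. indicator {0..1} r *\<^sub>R \<bar>g r\<bar> = 0"
    by eventually_elim (auto simp: indicator_def split: if_splits)
  then have "(LINT t:{0..1}|lborel. \<bar>g t\<bar>) = 0"
    unfolding set_lebesgue_integral_def by (simp add: integral_eq_zero_AE)
  then show False using Wc1p_sup_bound[OF W x0(1)] x0(2) by simp
qed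

text \<open>The Rayleigh quotient is invariant under scaling, so admissible pairs may be
  normalized to unit energy.\<close>

lemma grad_energy_scale: "grad_energy p (\<lambda>x. c * g x) = \<bar>c\<bar> powr p * grad_energy p g"
  unfolding grad_energy_def by (simp add: abs_mult powr_mult)

lemma weighted_mass_scale: "weighted_mass p (\<lambda>x. c * v x) = \<bar>c\<bar> powr p * weighted_mass p v"
  unfolding weighted_mass_def by (simp add: abs_mult powr_mult algebra_simps)

lemma admissible_normalize:
  assumes A: "admissible p v g" and p: "0 < p"
  obtains v' g' where "admissible p v' g'" "grad_energy p g' = 1"
    "grad_energy p g' / ((p - 1) * weighted_mass p v') = grad_energy p g / ((p - 1) * weighted_mass p v)"
proof -
  obtain x0 where W: "Wc1p_with_deriv p v g" and x0: "x0 \<in> {0..1}" "v x0 \<noteq> 0"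
    using A unfolding admissible_def by blast
  have N: "0 < grad_energy p g" using admissible_energy_pos[OF A p] .
  define c where "c = grad_energy p g powr (-1/p)"
  have c: "0 < c" using N by (simp add: c_def)
  have "c powr p = grad_energy p g powr ((-1/p)*p)" unfolding c_def by (rule powr_powr)
  also have "(-1/p)*p = -1" using p by simp
  finally have cp: "\<bar>c\<bar> powr p = 1 / grad_energy p g"
    using c N by (simp add: powr_minus_divide)
  have "admissible p (\<lambda>x. c * v x) (\<lambda>x. c * g x)"
    unfolding admissible_def using Wc1p_scale[OF W] x0 c by auto
  moreover have "grad_energy p (\<lambda>x. c * g x) = 1" using N by (simp add: grad_energy_scale cp)
  moreover have "grad_energy p (\<lambda>x. c * g x) / ((p - 1) * weighted_mass p (\<lambda>x. c * v x))
                 = grad_energy p g / ((p - 1) * weighted_mass p v)"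
    using N c cp by (simp add: grad_energy_scale weighted_mass_scale)
  ultimately show ?thesis using that by blast
qed

text \<open>For a normalized pair |v| \<le> 1, hence the weighted mass is at most 1.\<close>

lemma normalized_mass_le_one:
  assumes W: "Wc1p_with_deriv p v g" and N: "grad_energy p g = 1" and p: "2 \<le> p"
  shows "weighted_mass p v \<le> 1"
proof -
  have "weighted_mass p v \<le> (LINT r:{0..1::real}|lborel. (1::real))"
    unfolding weighted_mass_def
  proof (rule set_integral_mono)
    show "set_integrable lborel {0..1} (\<lambda>r. r powr (p - 2) * \<bar>v r\<bar> powr p)"
      using Wc1p_weight_integrable[OF W] p by simp
    fix r :: real assume r: "r \<in> {0..1}"
    show "r powr (p - 2) * \<bar>v r\<bar> powr p \<le> 1"
      using r p normalized_sup_bound[OF W N _ r] by (intro mult_le_one powr_le1) auto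
  qed (rule unit_const_integrable)
  then show ?thesis by (simp add: unit_const_integral)
qed

text \<open>The admissible set is nonempty: the derivative h = -indicator [1/2, oo) vanishes near 0
  and yields v(x) = min (1/2) (1 - x).\<close>

lemma exists_admissible:
  assumes "0 < p"
  shows "\<exists>v g. admissible p v g"
proof -
  define h :: "real \<Rightarrow> real" where "h t = (if 1/2 \<le> t then -1 else 0)" for t
  have "h = (\<lambda>t. - indicator {1/2..} t)" by (auto simp: h_def indicator_def fun_eq_iff)
  then have "(\<lambda>t. indicator {0..1} t *\<^sub>R h t) \<in> borel_measurable lborel" by simp
  then have W: "Wc1p_with_deriv p (\<lambda>x. (LINT t:{0..x}|lborel. h t) - (LINT t:{0..1}|lborel. h t)) h"
    by (intro Wc1p_of_bounded_deriv[OF _ _ _ _ assms, of _ 1 "1/2"])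
       (auto simp: h_def set_borel_measurable_def)
  have "(LINT t:{0..1}|lborel. h t) = (LINT t:{0..1}|lborel. (-1) * indicator {1/2..1::real} t)"
    by (rule set_lebesgue_integral_cong) (auto simp: h_def indicator_def)
  also have "\<dots> = -1/2" by (subst unit_indicator_integral(2)) auto
  finally have "(LINT t:{0..1}|lborel. h t) = -1/2" .
  moreover have "(LINT t:{0..0}|lborel. h t) = 0"
  proof -
    have "(\<lambda>t. indicator {0..0} t *\<^sub>R h t) = (\<lambda>t. 0)" by (auto simp: indicator_def h_def)
    then show ?thesis unfolding set_lebesgue_integral_def by simp
  qed
  ultimately show ?thesis using W unfolding admissible_def by force
qed

lemma quotient_lower_bound:
  assumes A: "admissible p v g" and p: "2 \<le> p"
  shows "1/(p-1) \<le> grad_energy p g / ((p - 1) * weighted_mass p v)"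
proof -
  obtain v' g' where A': "admissible p v' g'" "grad_energy p g' = 1"
    "grad_energy p g' / ((p - 1) * weighted_mass p v') = grad_energy p g / ((p - 1) * weighted_mass p v)"
    using admissible_normalize[OF A] p by auto
  have W': "Wc1p_with_deriv p v' g'" using A' unfolding admissible_def by blast
  have "0 < weighted_mass p v'" "weighted_mass p v' \<le> 1"
    using admissible_mass_pos[OF A'(1) p] normalized_mass_le_one[OF W' A'(2) p] by auto
  then have "1/(p-1) \<le> 1 / ((p - 1) * weighted_mass p v')" using p
    by (intro divide_left_mono mult_pos_pos) (auto intro: mult_left_le)
  then show ?thesis using A' by simp
qed

lemma eta1_le_quotient:
  assumes "admissible p v g" "2 \<le> p"
  shows "eta1 p \<le> grad_energy p g / ((p - 1) * weighted_mass p v)"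
  unfolding eta1_as_Inf using assms quotient_lower_bound[OF _ assms(2)]
  by (intro cInf_lower) (auto simp: bdd_below_def)

lemma eta1_lower_bound:
  assumes "2 \<le> p"
  shows "1/(p-1) \<le> eta1 p"
  unfolding eta1_as_Inf using assms exists_admissible[of p] quotient_lower_bound
  by (intro cInf_greatest) auto

lemma eta1_approx:
  assumes p: "2 \<le> p" and e: "0 < e"
  obtains v g where "admissible p v g" "grad_energy p g = 1"
    "grad_energy p g / ((p - 1) * weighted_mass p v) < eta1 p + e"
proof -
  have ne: "{grad_energy p g / ((p - 1) * weighted_mass p v) | v g. admissible p v g} \<noteq> {}"
    using exists_admissible p by simp
  have "eta1 p < eta1 p + e" using e by simp
  then obtain v g where A: "admissible p v g" "grad_energy p g / ((p - 1) * weighted_mass p v) < eta1 p + e"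
    using cInf_lessD[OF ne] unfolding eta1_as_Inf by blast
  obtain v' g' where "admissible p v' g'" "grad_energy p g' = 1"
    "grad_energy p g' / ((p - 1) * weighted_mass p v') = grad_energy p g / ((p - 1) * weighted_mass p v)"
    using admissible_normalize[OF A(1)] p by auto
  then show ?thesis using that A by simp
qed

definition scaled_eta :: "real \<Rightarrow> real" where
  "scaled_eta p = (p - 1) * eta1 p"

lemma scaled_eta_ge_one: "2 \<le> p \<Longrightarrow> 1 \<le> scaled_eta p"
  using eta1_lower_bound[of p] unfolding scaled_eta_def by (simp add: field_simps)

lemma scaled_eta_approx:
  assumes p: "2 \<le> p" and e: "0 < e"
  obtains v g where "admissible p v g" "grad_energy p g = 1" "0 < weighted_mass p v"
    "1 / weighted_mass p v < scaled_eta p + e"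
proof -
  obtain v g where A: "admissible p v g" "grad_energy p g = 1"
    "grad_energy p g / ((p - 1) * weighted_mass p v) < eta1 p + e / (p - 1)"
    using eta1_approx[of p "e / (p - 1)"] p e by auto
  have "(p - 1) * (1 / ((p - 1) * weighted_mass p v)) < (p - 1) * (eta1 p + e / (p - 1))"
    using A(2,3) p by (intro mult_strict_left_mono) auto
  moreover have "(p - 1) * (1 / ((p - 1) * weighted_mass p v)) = 1 / weighted_mass p v" using p by simp
  moreover have "(p - 1) * (eta1 p + e / (p - 1)) = scaled_eta p + e"
    using p unfolding scaled_eta_def by (simp add: distrib_left)
  ultimately show ?thesis using that A(1,2) admissible_mass_pos[OF A(1) p] by simp
qed

lemma normalized_mass_antimono:
  assumes W: "Wc1p_with_deriv q v g" and N: "grad_energy q g = 1" and p: "2 \<le> p" "p \<le> q"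
  shows "weighted_mass q v \<le> weighted_mass p v"
  unfolding weighted_mass_def
proof (rule set_integral_mono)
  show "set_integrable lborel {0..1} (\<lambda>r. r powr (q - 2) * \<bar>v r\<bar> powr q)"
    using Wc1p_weight_integrable[OF W] p by simp
  show "set_integrable lborel {0..1} (\<lambda>r. r powr (p - 2) * \<bar>v r\<bar> powr p)"
    using Wc1p_weight_integrable[OF W] p by simp
  fix r :: real assume r: "r \<in> {0..1}"
  show "r powr (q - 2) * \<bar>v r\<bar> powr q \<le> r powr (p - 2) * \<bar>v r\<bar> powr p"
    using weight_antimono[OF _ _ normalized_sup_bound[OF W N _ r] p] r p by auto
qed

text \<open>Step (1): H is nondecreasing.  A near-optimal normalized pair for q is admissible
  for p, with energy at most 1 and weighted mass at least its mass for q.\<close>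

lemma scaled_eta_mono:
  assumes p: "2 \<le> p" "p \<le> q"
  shows "scaled_eta p \<le> scaled_eta q"
proof (rule field_le_epsilon)
  fix e :: real assume e: "0 < e"
  obtain v g where A: "admissible q v g" "grad_energy q g = 1" "0 < weighted_mass q v"
    "1 / weighted_mass q v < scaled_eta q + e"
    using scaled_eta_approx[of q e] p e by auto
  have W: "Wc1p_with_deriv q v g" using A unfolding admissible_def by blast
  have Ap: "admissible p v g" using A Wc1p_lower_exponent(1)[OF W] p unfolding admissible_def by auto
  have Np: "grad_energy p g \<le> 1" using Wc1p_lower_exponent(2)[OF W, of p] p A(2) by simp
  have "scaled_eta p \<le> (p - 1) * (grad_energy p g / ((p - 1) * weighted_mass p v))"
    unfolding scaled_eta_def using eta1_le_quotient[OF Ap p(1)] p by (intro mult_left_mono) auto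
  also have "\<dots> = grad_energy p g / weighted_mass p v" using p by simp
  also have "\<dots> \<le> 1 / weighted_mass q v"
    using Np grad_energy_nonneg A(3) normalized_mass_antimono[OF W A(2) p] by (intro frac_le) auto
  finally show "scaled_eta p \<le> scaled_eta q + e" using A(4) by simp
qed

definition truncate_deriv :: "real \<Rightarrow> real \<Rightarrow> (real \<Rightarrow> real) \<Rightarrow> real \<Rightarrow> real" where
  "truncate_deriv M \<delta> g t = (if \<delta> \<le> t then max (-M) (min M (g t)) else 0)"

definition normalized_primitive :: "(real \<Rightarrow> real) \<Rightarrow> real \<Rightarrow> real" where
  "normalized_primitive h x = (LINT t:{0..x}|lborel. h t) - (LINT t:{0..1}|lborel. h t)"

lemma truncate_deriv_Wc1p:
  assumes g: "set_integrable lborel {0..1} g" and \<delta>: "0 < \<delta>" and q: "0 < q"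
  shows "Wc1p_with_deriv q (normalized_primitive (truncate_deriv M \<delta> g)) (truncate_deriv M \<delta> g)"
proof -
  have "(\<lambda>t. indicator {0..1} t *\<^sub>R g t) \<in> borel_measurable lborel"
    using g unfolding set_integrable_def by (rule borel_measurable_integrable)
  then have "(\<lambda>t. indicator {0..1} t *
        (if \<delta> \<le> t then max (-M) (min M (indicator {0..1} t *\<^sub>R g t)) else 0)) \<in> borel_measurable lborel"
    by measurable
  moreover have "(\<lambda>t. indicator {0..1} t *\<^sub>R truncate_deriv M \<delta> g t) =
      (\<lambda>t. indicator {0..1} t * (if \<delta> \<le> t then max (-M) (min M (indicator {0..1} t *\<^sub>R g t)) else 0))"
    by (auto simp: truncate_deriv_def indicator_def fun_eq_iff)
  ultimately have "set_borel_measurable lborel {0..1} (truncate_deriv M \<delta> g)"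
    unfolding set_borel_measurable_def by simp
  then show ?thesis
    unfolding normalized_primitive_def
    by (rule Wc1p_of_bounded_deriv[OF _ _ \<delta> _ q, where B = "\<bar>M\<bar>"])
       (auto simp: truncate_deriv_def)
qed

lemma truncate_deriv_energy:
  assumes Wq: "Wc1p_with_deriv q (normalized_primitive (truncate_deriv M \<delta> g)) (truncate_deriv M \<delta> g)"
    and W: "Wc1p_with_deriv p v g" and M: "1 \<le> M" and p: "2 \<le> p" "p \<le> q"
  shows "grad_energy q (truncate_deriv M \<delta> g) \<le> M powr (q - p) * grad_energy p g"
proof -
  have "grad_energy q (truncate_deriv M \<delta> g) \<le> (LINT t:{0..1}|lborel. M powr (q - p) * \<bar>g t\<bar> powr p)"
    unfolding grad_energy_def
    using Wc1p_deriv_powr_integrable[OF Wq] Wc1p_deriv_powr_integrable[OF W] p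
      clamped_powr_bound[OF clamp_error(2,3)[OF M p(1)]]
    by (intro set_integral_mono) (auto simp: truncate_deriv_def)
  also have "\<dots> = M powr (q - p) * grad_energy p g" by (simp add: grad_energy_def)
  finally show ?thesis .
qed

lemma truncate_deriv_L1_error:
  assumes W: "Wc1p_with_deriv p v g" and Wh: "Wc1p_with_deriv q vh (truncate_deriv M \<delta> g)"
    and M: "1 \<le> M" and p: "2 \<le> p" and \<delta>: "0 \<le> \<delta>" "\<delta> \<le> 1"
  shows "(LINT t:{0..1}|lborel. \<bar>truncate_deriv M \<delta> g t - g t\<bar>) \<le> M * \<delta> + grad_energy p g / M"
proof -
  have i1: "set_integrable lborel {0..1} (\<lambda>t. M * indicator {..\<delta>} t)"
    using unit_initial_segment_integral(1)[of \<delta> M] \<delta> by simp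
  have i2: "set_integrable lborel {0..1} (\<lambda>t. \<bar>g t\<bar> powr p / M)"
    using Wc1p_deriv_powr_integrable[OF W] by simp
  have err: "\<bar>truncate_deriv M \<delta> g t - g t\<bar> \<le> M * indicator {..\<delta>} t + \<bar>g t\<bar> powr p / M" for t
    unfolding truncate_deriv_def by (rule clamp_error(1)[OF M p])
  have "(LINT t:{0..1}|lborel. \<bar>truncate_deriv M \<delta> g t - g t\<bar>) \<le>
        (LINT t:{0..1}|lborel. M * indicator {..\<delta>} t + \<bar>g t\<bar> powr p / M)"
    using Wc1p_deriv_integrable[OF Wh] Wc1p_deriv_integrable[OF W] i1 i2 err
    by (intro set_integral_mono set_integral_add set_integrable_abs set_integral_diff) auto
  also have "\<dots> = M * \<delta> + grad_energy p g / M"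
    using i1 i2 unit_initial_segment_integral(2)[of \<delta> M] \<delta> by (simp add: grad_energy_def)
  finally show ?thesis .
qed

lemma normalized_truncation:
  assumes W: "Wc1p_with_deriv p v g" and N: "grad_energy p g = 1"
    and p: "2 \<le> p" "p \<le> q" and M: "1 \<le> M"
  obtains vh gh where "Wc1p_with_deriv q vh gh" "grad_energy q gh \<le> M powr (q - p)"
    "\<And>x. x \<in> {0..1} \<Longrightarrow> \<bar>vh x - v x\<bar> \<le> 2 / M" "\<And>x. x \<in> {0..1} \<Longrightarrow> \<bar>vh x\<bar> \<le> 1"
proof -
  define \<delta> where "\<delta> = 1 / M^2"
  have \<delta>: "0 < \<delta>" "\<delta> \<le> 1" "M * \<delta> = 1 / M"
    using M by (auto simp: \<delta>_def power2_eq_square power_le_one_iff intro: order.trans[OF _ mult_mono[of 1 M 1 M]])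
  define gh where "gh = truncate_deriv M \<delta> g"
  define vh where "vh = normalized_primitive gh"
  have g: "set_integrable lborel {0..1} g" using Wc1p_deriv_integrable[OF W] .
  have Wq: "Wc1p_with_deriv q vh gh"
    unfolding vh_def gh_def using truncate_deriv_Wc1p[OF g \<delta>(1)] p by simp
  have gh: "set_integrable lborel {0..1} gh" using Wc1p_deriv_integrable[OF Wq] .
  have L1: "(LINT t:{0..1}|lborel. \<bar>gh t - g t\<bar>) \<le> 2 / M"
    using truncate_deriv_L1_error[OF W Wq[unfolded gh_def] M p(1)] \<delta> N by (simp add: gh_def)
  have close: "\<bar>vh x - v x\<bar> \<le> 2 / M" if x: "x \<in> {0..1}" for x
  proof -
    have d: "set_integrable lborel {0..1} (\<lambda>t. gh t - g t)" using gh g by auto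
    have "set_integrable lborel {0..x} g" "set_integrable lborel {0..x} gh"
      using x by (auto intro: set_integrable_subset[OF g] set_integrable_subset[OF gh])
    then have "vh x - v x = (LINT t:{0..x}|lborel. gh t - g t) - (LINT t:{0..1}|lborel. gh t - g t)"
      unfolding vh_def normalized_primitive_def Wc1p_repr[OF W x] using gh g by (simp add: set_integral_diff)
    then show ?thesis using partial_integral_deviation[OF d x] L1 by simp
  qed
  have bound: "\<bar>vh x\<bar> \<le> 1" if x: "x \<in> {0..1}" for x
  proof -
    have "\<bar>gh t\<bar> \<le> \<bar>g t\<bar>" for t
      unfolding gh_def truncate_deriv_def by (rule clamp_error(3)[OF M p(1)])
    then have "(LINT t:{0..1}|lborel. \<bar>gh t\<bar>) \<le> (LINT t:{0..1}|lborel. \<bar>g t\<bar>)"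
      using gh g by (intro set_integral_mono set_integrable_abs) auto
    also have "\<dots> \<le> 1" using normalized_L1_bound[OF W N] p by simp
    finally show ?thesis using Wc1p_sup_bound[OF Wq x] by simp
  qed
  have "grad_energy q gh \<le> M powr (q - p)"
    using truncate_deriv_energy[OF Wq[unfolded vh_def gh_def] W M p] N by (simp add: gh_def)
  then show ?thesis using that Wq close bound by blast
qed

lemma weighted_mass_perturbation:
  assumes W: "Wc1p_with_deriv p v g" and Wh: "Wc1p_with_deriv p' vh gh" and q: "2 \<le> q" and e: "0 \<le> e"
    and vb: "\<And>x. x \<in> {0..1} \<Longrightarrow> \<bar>v x\<bar> \<le> 1" and vhb: "\<And>x. x \<in> {0..1} \<Longrightarrow> \<bar>vh x\<bar> \<le> 1"
    and close: "\<And>x. x \<in> {0..1} \<Longrightarrow> \<bar>vh x - v x\<bar> \<le> e"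
  shows "weighted_mass q v - q * e \<le> weighted_mass q vh"
proof -
  have iv: "set_integrable lborel {0..1} (\<lambda>r. r powr (q - 2) * \<bar>v r\<bar> powr q)"
    using Wc1p_weight_integrable[OF W] q by simp
  have "(LINT r:{0..1}|lborel. r powr (q - 2) * \<bar>v r\<bar> powr q - q * e) \<le> weighted_mass q vh"
    unfolding weighted_mass_def
  proof (rule set_integral_mono)
    show "set_integrable lborel {0..1} (\<lambda>r. r powr (q - 2) * \<bar>v r\<bar> powr q - q * e)"
      using iv unit_const_integrable by (intro set_integral_diff) auto
    show "set_integrable lborel {0..1} (\<lambda>r. r powr (q - 2) * \<bar>vh r\<bar> powr q)"
      using Wc1p_weight_integrable[OF Wh] q by simp
    fix r :: real assume r: "r \<in> {0..1}"
    have "\<bar>v r - vh r\<bar> \<le> e" using close[OF r] by simp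
    then have a: "\<bar>v r\<bar> powr q - q * e \<le> \<bar>vh r\<bar> powr q"
      using abs_powr_lower_bound[OF vb[OF r] vhb[OF r]] q by simp
    have r1: "r powr (q - 2) \<le> 1" "0 \<le> r powr (q - 2)" using r q by (auto intro: powr_le1)
    have "r powr (q - 2) * (q * e) \<le> q * e"
      using r1 q e by (intro mult_left_le_one_le) auto
    moreover have "r powr (q - 2) * (\<bar>v r\<bar> powr q - q * e) \<le> r powr (q - 2) * \<bar>vh r\<bar> powr q"
      using a r1 by (intro mult_left_mono) auto
    ultimately show "r powr (q - 2) * \<bar>v r\<bar> powr q - q * e \<le> r powr (q - 2) * \<bar>vh r\<bar> powr q"
      by (simp add: right_diff_distrib)
  qed
  moreover have "(LINT r:{0..1}|lborel. r powr (q - 2) * \<bar>v r\<bar> powr q - q * e) = weighted_mass q v - q * e"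
    using iv unit_const_integrable by (simp add: weighted_mass_def set_integral_diff unit_const_integral)
  ultimately show ?thesis by simp
qed

lemma weighted_mass_exponent_shift:
  assumes W: "Wc1p_with_deriv p' v g" and vb: "\<And>x. x \<in> {0..1} \<Longrightarrow> \<bar>v x\<bar> \<le> 1"
    and p: "2 \<le> p" "p \<le> q" and s: "0 < s" "s \<le> 1"
  shows "(s^2) powr (q - p) * (weighted_mass p v - s^2 - s) \<le> weighted_mass q v"
proof -
  let ?f = "\<lambda>r. r powr (p - 2) * \<bar>v r\<bar> powr p - s^2 - (1::real) * indicator {..s} r"
  have ip: "set_integrable lborel {0..1} (\<lambda>r. r powr (p - 2) * \<bar>v r\<bar> powr p)"
    using Wc1p_weight_integrable[OF W] p by simp
  have iq: "set_integrable lborel {0..1} (\<lambda>r. r powr (q - 2) * \<bar>v r\<bar> powr q)"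
    using Wc1p_weight_integrable[OF W] p by simp
  have ii: "set_integrable lborel {0..1} (\<lambda>r. (1::real) * indicator {..s} r)"
    using unit_initial_segment_integral(1)[of s 1] s by simp
  have ps: "set_integrable lborel {0..1} (\<lambda>r. r powr (p - 2) * \<bar>v r\<bar> powr p - s^2)"
    using ip unit_const_integrable by (intro set_integral_diff) auto
  have "(LINT r:{0..1}|lborel. ?f r)
        = (LINT r:{0..1}|lborel. r powr (p - 2) * \<bar>v r\<bar> powr p - s^2) - (LINT r:{0..1}|lborel. 1 * indicator {..s} r)"
    using ps ii by (rule set_integral_diff)
  also have "\<dots> = weighted_mass p v - s^2 - s"
    using ip unit_const_integrable unit_initial_segment_integral(2)[of s 1] s
    by (simp add: weighted_mass_def set_integral_diff unit_const_integral)
  finally have e: "(LINT r:{0..1}|lborel. ?f r) = weighted_mass p v - s^2 - s" .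
  have "(LINT r:{0..1}|lborel. (s^2) powr (q - p) * ?f r) \<le> weighted_mass q v"
    unfolding weighted_mass_def using ps ii iq weight_exponent_shift[OF _ _ vb p s(1)]
    by (intro set_integral_mono set_integral_mult_right set_integral_diff) auto
  then show ?thesis using e by simp
qed

lemma scaled_eta_truncation_bound:
  assumes A: "admissible p v g" and N: "grad_energy p g = 1" and p: "2 \<le> p" "p \<le> q"
    and M: "1 \<le> M" and s: "0 < s" "s \<le> 1"
  defines "B \<equiv> (s^2) powr (q - p) * (weighted_mass p v - s^2 - s) - q * (2 / M)"
  assumes B: "0 < B"
  shows "scaled_eta q \<le> M powr (q - p) / B"
proof -
  have W: "Wc1p_with_deriv p v g" using A unfolding admissible_def by blast
  have vb: "\<bar>v x\<bar> \<le> 1" if "x \<in> {0..1}" for x using normalized_sup_bound[OF W N _ that] p by simp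
  obtain vh gh where Wq: "Wc1p_with_deriv q vh gh" and Nq: "grad_energy q gh \<le> M powr (q - p)"
    and close: "\<And>x. x \<in> {0..1} \<Longrightarrow> \<bar>vh x - v x\<bar> \<le> 2 / M" and vhb: "\<And>x. x \<in> {0..1} \<Longrightarrow> \<bar>vh x\<bar> \<le> 1"
    using normalized_truncation[OF W N p M] by blast
  have "weighted_mass q v - q * (2 / M) \<le> weighted_mass q vh"
    by (rule weighted_mass_perturbation[OF W Wq _ _ vb vhb close]) (use p M in auto)
  then have "B \<le> weighted_mass q vh"
    using weighted_mass_exponent_shift[OF W vb p s] unfolding B_def by linarith
  moreover have "admissible q vh gh"
  proof -
    have "\<exists>x\<in>{0..1}. vh x \<noteq> 0"
    proof (rule ccontr)
      assume "\<not> ?thesis"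
      then have "weighted_mass q vh = (LINT r:{0..1::real}|lborel. (0::real))"
        unfolding weighted_mass_def using p by (intro set_lebesgue_integral_cong) auto
      then show False using \<open>B \<le> weighted_mass q vh\<close> B by simp
    qed
    then show ?thesis using Wq unfolding admissible_def by blast
  qed
  ultimately have "scaled_eta q \<le> grad_energy q gh / weighted_mass q vh"
    using eta1_le_quotient[of q vh gh] p B unfolding scaled_eta_def
    by (simp add: mult_left_mono field_simps del: divide_const_simps)
  also have "\<dots> \<le> M powr (q - p) / B"
    using Nq grad_energy_nonneg \<open>B \<le> weighted_mass q vh\<close> B by (intro frac_le) auto
  finally show ?thesis .
qed

text \<open>Given a lower bound D0 for the weighted mass,
  take s = \<tau> D0/4 and M \<ge> 4P/(\<tau> D0); for q - p small, M^(q-p) \<le> 1 + \<tau> and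
  s^(2(q-p)) \<ge> 1 - \<tau>, and the truncation bound becomes H(q) \<le> (1 + \<tau>) / ((1 - 2\<tau>) D_p(v)).\<close>

lemma scaled_eta_right_estimate:
  assumes P: "2 \<le> P" and \<tau>: "0 < \<tau>" "\<tau> \<le> 1/4" and D0: "0 < D0" "D0 \<le> 1"
  obtains d where "0 < d"
    "\<And>p q v g. admissible p v g \<Longrightarrow> grad_energy p g = 1 \<Longrightarrow> D0 \<le> weighted_mass p v \<Longrightarrow>
       2 \<le> p \<Longrightarrow> p \<le> q \<Longrightarrow> q \<le> P \<Longrightarrow> q - p \<le> d \<Longrightarrow>
       scaled_eta q \<le> (1 + \<tau>) / ((1 - 2 * \<tau>) * weighted_mass p v)"
proof -
  define s where "s = \<tau> * D0 / 4"
  have tD: "\<tau> * D0 \<le> 1/4 * 1" using \<tau> D0 by (intro mult_mono) auto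
  have s: "0 < s" "s \<le> 1" "s^2 < 1" "s^2 + s \<le> \<tau> * D0 / 2"
  proof -
    show s0: "0 < s" and s1: "s \<le> 1" using \<tau> D0 tD by (auto simp: s_def)
    have "s^2 \<le> s" using s0 s1 by (simp add: power2_eq_square mult_left_le)
    moreover have "s < 1" "2 * s = \<tau> * D0 / 2" using tD by (auto simp: s_def)
    ultimately show "s^2 < 1" "s^2 + s \<le> \<tau> * D0 / 2" by linarith+
  qed
  define M where "M = max 2 (4 * P / (\<tau> * D0))"
  have M: "1 \<le> M" "2 * P / M \<le> \<tau> * D0 / 2"
  proof -
    show "1 \<le> M" by (auto simp: M_def)
    have "2 \<le> M" "4 * P / (\<tau> * D0) \<le> M" by (simp_all add: M_def)
    moreover from this have "4 * P \<le> M * (\<tau> * D0)" using \<tau> D0 by (simp add: divide_le_eq)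
    ultimately show "2 * P / M \<le> \<tau> * D0 / 2" by (simp add: field_simps)
  qed
  obtain d1 where d1: "0 < d1" "\<And>x. 0 \<le> x \<Longrightarrow> x \<le> d1 \<Longrightarrow> \<bar>M powr x - 1\<bar> < \<tau>"
    using powr_close_to_one[of M \<tau>] M \<tau> by auto
  obtain d2 where d2: "0 < d2" "\<And>x. 0 \<le> x \<Longrightarrow> x \<le> d2 \<Longrightarrow> \<bar>(s^2) powr x - 1\<bar> < \<tau>"
    using powr_close_to_one[of "s^2" \<tau>] s \<tau> by auto
  show ?thesis
  proof (rule that[of "min d1 d2"])
    fix p q v g
    assume A: "admissible p v g" "grad_energy p g = 1" "D0 \<le> weighted_mass p v"
      and pq: "2 \<le> p" "p \<le> q" "q \<le> P" "q - p \<le> min d1 d2"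
    define D where "D = weighted_mass p v"
    have Mx: "M powr (q - p) \<le> 1 + \<tau>" and sx: "1 - \<tau> \<le> (s^2) powr (q - p)"
      using d1(2)[of "q - p"] d2(2)[of "q - p"] pq by auto
    have qM: "q * (2 / M) \<le> \<tau> * D0 / 2"
      using M pq mult_right_mono[of q P "2 / M"] by simp
    have DD0: "D0 \<le> D" "\<tau> * D0 \<le> \<tau> * D" using A(3) \<tau> by (auto simp: D_def)
    define Y where "Y = D - s^2 - s"
    define T where "T = (s^2) powr (q - p)"
    have "\<tau> * D0 \<le> D0" "0 \<le> \<tau> * D0" using \<tau> D0 by (auto intro: mult_left_le_one_le)
    then have "0 \<le> Y" using s DD0 unfolding Y_def by linarith
    then have f1: "(1 - \<tau>) * Y \<le> T * Y" using sx by (intro mult_right_mono) (auto simp: T_def)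
    have "(1 - \<tau>) * (s^2 + s) \<le> 1 * (s^2 + s)" using \<tau> s by (intro mult_right_mono) auto
    then have f2: "D - \<tau> * D - (s^2 + s) \<le> (1 - \<tau>) * Y" unfolding Y_def by (simp add: algebra_simps)
    have "(1 - 2 * \<tau>) * D = D - 2 * (\<tau> * D)" by (simp add: algebra_simps)
    then have B: "(1 - 2 * \<tau>) * D \<le> (s^2) powr (q - p) * (D - s^2 - s) - q * (2 / M)"
      using f1 f2 DD0 s(4) qM unfolding Y_def T_def by linarith
    have B0: "0 < (1 - 2 * \<tau>) * D" using \<tau> D0 DD0 by simp
    have "scaled_eta q \<le> M powr (q - p) / ((s^2) powr (q - p) * (D - s^2 - s) - q * (2 / M))"
      using scaled_eta_truncation_bound[OF A(1,2) pq(1,2) M(1) s(1,2)] B B0 unfolding D_def by simp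
    also have "\<dots> \<le> (1 + \<tau>) / ((1 - 2 * \<tau>) * D)"
      using Mx B B0 \<tau> by (intro frac_le) auto
    finally show "scaled_eta q \<le> (1 + \<tau>) / ((1 - 2 * \<tau>) * weighted_mass p v)" unfolding D_def .
  qed (use d1 d2 in simp)
qed

text \<open>Step (2): H is uniformly upper semicontinuous from the right on [2, P].  Near-optimal
  pairs for p \<le> P have weighted mass at least 1/(H(P)+1), so the previous estimate applies
  with a single d.\<close>

lemma scaled_eta_right_usc:
  assumes P: "2 \<le> P" and e: "0 < e"
  obtains d where "0 < d"
    "\<And>p q. 2 \<le> p \<Longrightarrow> p \<le> q \<Longrightarrow> q \<le> P \<Longrightarrow> q - p \<le> d \<Longrightarrow> scaled_eta q \<le> scaled_eta p + e"
proof -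
  define K where "K = scaled_eta P"
  have K: "1 \<le> K" using scaled_eta_ge_one[OF P] by (simp add: K_def)
  define \<tau> where "\<tau> = min (1/4) (e / (12 * (K + 1)))"
  have \<tau>: "0 < \<tau>" "\<tau> \<le> 1/4" "6 * \<tau> * (K + 1) \<le> e / 2"
  proof -
    show "0 < \<tau>" using e K by (simp add: \<tau>_def)
    show "\<tau> \<le> 1/4" unfolding \<tau>_def by (rule min.cobounded1)
    have "6 * \<tau> * (K + 1) \<le> 6 * (e / (12 * (K + 1))) * (K + 1)"
      using K by (intro mult_right_mono mult_left_mono) (auto simp: \<tau>_def)
    also have "\<dots> = e / 2" using K by (simp add: field_simps)
    finally show "6 * \<tau> * (K + 1) \<le> e / 2" .
  qed
  obtain d where d: "0 < d" and est: "\<And>p q v g. admissible p v g \<Longrightarrow> grad_energy p g = 1 \<Longrightarrow>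
      1 / (K + 1) \<le> weighted_mass p v \<Longrightarrow> 2 \<le> p \<Longrightarrow> p \<le> q \<Longrightarrow> q \<le> P \<Longrightarrow> q - p \<le> d \<Longrightarrow>
      scaled_eta q \<le> (1 + \<tau>) / ((1 - 2 * \<tau>) * weighted_mass p v)"
    using scaled_eta_right_estimate[OF P \<tau>(1,2), of "1 / (K + 1)"] K by auto
  show ?thesis
  proof (rule that[OF d])
    fix p q :: real
    assume pq: "2 \<le> p" "p \<le> q" "q \<le> P" "q - p \<le> d"
    obtain v g where A: "admissible p v g" "grad_energy p g = 1" "0 < weighted_mass p v"
      and close: "1 / weighted_mass p v < scaled_eta p + min (e/2) 1"
      using scaled_eta_approx[OF pq(1), of "min (e/2) 1"] e by auto
    define D where "D = weighted_mass p v"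
    have "scaled_eta p \<le> K" unfolding K_def using scaled_eta_mono pq by simp
    then have DK: "1 / D \<le> K + 1" using close unfolding D_def by linarith
    then have "1 / (K + 1) \<le> D" using A(3) K by (simp add: D_def field_simps)
    then have "scaled_eta q \<le> ((1 + \<tau>) / (1 - 2 * \<tau>)) * (1 / D)"
      using est[OF A(1,2) _ pq] unfolding D_def by simp
    also have "\<dots> \<le> (1 + 6 * \<tau>) * (1 / D)"
      using frac_bound[of \<tau>] \<tau> A(3) by (intro mult_right_mono) (auto simp: D_def)
    also have "\<dots> \<le> 1 / D + 6 * \<tau> * (K + 1)"
      using mult_left_mono[OF DK, of "6 * \<tau>"] \<tau> by (simp add: algebra_simps)
    also have "\<dots> \<le> scaled_eta p + e"
      using close \<tau>(3) unfolding D_def by linarith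
    finally show "scaled_eta q \<le> scaled_eta p + e" .
  qed
qed

text \<open>A nondecreasing function that is uniformly upper semicontinuous from the right is
  continuous; applied to H.\<close>

lemma scaled_eta_continuous: "continuous_on {2..} scaled_eta"
  unfolding continuous_on_iff
proof (intro ballI allI impI)
  fix x0 e :: real assume x0: "x0 \<in> {2..}" and e: "0 < e"
  obtain d where d: "0 < d" "\<And>p q. 2 \<le> p \<Longrightarrow> p \<le> q \<Longrightarrow> q \<le> x0 + 1 \<Longrightarrow> q - p \<le> d \<Longrightarrow>
      scaled_eta q \<le> scaled_eta p + e/2"
    using scaled_eta_right_usc[of "x0 + 1" "e/2"] x0 e by auto
  show "\<exists>d>0. \<forall>y\<in>{2..}. dist y x0 < d \<longrightarrow> dist (scaled_eta y) (scaled_eta x0) < e"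
  proof (intro exI[of _ "min d 1"] conjI ballI impI)
    fix y assume y: "y \<in> {2..}" "dist y x0 < min d 1"
    show "dist (scaled_eta y) (scaled_eta x0) < e"
    proof (cases "x0 \<le> y")
      case True
      then show ?thesis using scaled_eta_mono[of x0 y] d(2)[of x0 y] x0 y e by (auto simp: dist_real_def)
    next
      case False
      then show ?thesis using scaled_eta_mono[of y x0] d(2)[of y x0] x0 y e by (auto simp: dist_real_def)
    qed
  qed (use d in simp)
qed

theorem lemma2p7:
  shows "continuous_on {2..} mu1"
proof -
  have "continuous_on {2..} (\<lambda>p. scaled_eta p / (p - 1))"
    by (intro continuous_intros scaled_eta_continuous) auto
  then have eta: "continuous_on {2..} eta1"
    by (rule continuous_on_eq) (auto simp: scaled_eta_def)
  have "eta1 p \<noteq> 0" if "p \<in> {2..}" for p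
    using eta1_lower_bound[of p] that by (auto simp: field_simps)
  then have "continuous_on {2..} (\<lambda>p. eta1 p powr (1 / (p - 1)))"
    by (intro continuous_intros eta) auto
  then show ?thesis unfolding mu1_def[abs_def] .
qed

end
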